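(* Let $\ell\ge 3$ be prime. Let $r,s,t$ be positive integers with $\gcd(r,s,t)=1$. Let $q=2k\ell+1$ be a prime (with $k$ a positive integer) that does not divide $r$. Define \[ \mu(\ell,q)=\{\eta^{2\ell}:\eta\in\mathbb{F}_q\}=\{0\}\cup\{\zeta\in\mathbb{F}_q^*:\zeta^k=1\} \] and \[ B(\ell,q)=\left\{\zeta\in\mu(\ell,q): \big((s\zeta+t)/r\big)^{2k}\in\{0,1\}\right\}\subseteq \mathbb{F}_q . \] If $B(\ell,q)=\emptyset$, then the equation $r y_2^\ell-s y_1^{2\ell}=t$ has no solutions in integers $y_1,y_2$. *)

theory Defs
  imports "HOL-Number_Theory.Number_Theory"
begin

text \<open>Elements of F_q are represented by their residues in {0..q-1}.
  mu l q = set of 2l-th powers in F_q.\<close>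
definition mu :: "nat \<Rightarrow> nat \<Rightarrow> int set" where
  "mu l q = {(\<eta> ^ (2 * l)) mod int q | \<eta>. \<eta> \<in> {0..<int q}}"

text \<open>B(l,q): those zeta in mu with ((s zeta + t)/r)^(2k) in {0,1} in F_q,
  where the quotient w = (s zeta + t)/r in F_q is the residue w with r w = s zeta + t.\<close>
definition Bset :: "nat \<Rightarrow> nat \<Rightarrow> nat \<Rightarrow> int \<Rightarrow> int \<Rightarrow> int \<Rightarrow> int set" where
  "Bset l q k r s t = {\<zeta> \<in> mu l q. \<exists>w \<in> {0..<int q}. [r * w = s * \<zeta> + t] (mod int q) \<and>
       ((w ^ (2 * k)) mod int q = 0 \<or> (w ^ (2 * k)) mod int q = 1)}"

end

theory Submission
  imports Defs
begin

text \<open>Reduce a solution modulo q: \<open>\<zeta> = y1^(2l)\<close> lies in \<open>\<mu>(l,q)\<close> and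
  \<open>w = y2^l\<close> satisfies \<open>r w = s \<zeta> + t\<close>. Since \<open>2kl = q - 1\<close>, Fermat's little theorem
  gives \<open>w^(2k) = y2^(q-1) \<in> {0, 1}\<close>, so \<open>\<zeta> \<in> B(l,q)\<close>.\<close>

lemma power_mod_mem_mu:
  fixes y :: int
  assumes "q > 0"
  shows "y ^ (2 * l) mod int q \<in> mu l q"
proof -
  have "y ^ (2 * l) mod int q = (y mod int q) ^ (2 * l) mod int q"
    by (simp add: power_mod)
  moreover have "y mod int q \<in> {0..<int q}"
    using assms by simp
  ultimately show ?thesis
    unfolding mu_def by blast
qed

lemma fermat_power_mod_int:
  fixes y :: int
  assumes "prime p"
  shows "y ^ (p - 1) mod int p = 0 \<or> y ^ (p - 1) mod int p = 1"
proof (cases "int p dvd y")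
  case True
  have "p - 1 > 0"
    using prime_gt_1_nat[OF assms] by simp
  then have "y dvd y ^ (p - 1)"
    by simp
  with True have "int p dvd y ^ (p - 1)"
    by (rule dvd_trans)
  then show ?thesis
    by simp
next
  case False
  define a where "a = nat (y mod int p)"
  have p0: "int p > 0"
    using prime_gt_0_nat[OF assms] by simp
  have y_cong_a: "[y = int a] (mod int p)"
    using p0 by (simp add: a_def cong_def)
  have "\<not> p dvd a"
  proof
    assume "p dvd a"
    then have "int p dvd y mod int p"
      using p0 by (simp add: a_def flip: int_dvd_int_iff)
    then show False
      using False by (simp add: dvd_mod_iff)
  qed
  then have "[a ^ (p - 1) = 1] (mod p)"
    using fermat_theorem assms by blast
  then have "[int a ^ (p - 1) = 1] (mod int p)"
    by (metis cong_int_iff of_nat_1 of_nat_power)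
  then have "[y ^ (p - 1) = 1] (mod int p)"
    using cong_pow[OF y_cong_a] cong_trans by blast
  then show ?thesis
    using prime_gt_1_nat[OF assms] by (simp add: cong_def)
qed

lemma solution_mod_mem_Bset:
  fixes y1 y2 r s t :: int
  assumes q: "q = 2 * k * l + 1" "prime q"
    and sol: "r * y2 ^ l - s * y1 ^ (2 * l) = t"
  shows "y1 ^ (2 * l) mod int q \<in> Bset l q k r s t"
proof -
  define \<zeta> where "\<zeta> = y1 ^ (2 * l) mod int q"
  define w where "w = y2 ^ l mod int q"
  have q0: "q > 0"
    using prime_gt_0_nat[OF q(2)] .
  have "w ^ (2 * k) mod int q = (y2 ^ l) ^ (2 * k) mod int q"
    by (simp add: w_def power_mod)
  also have "\<dots> = y2 ^ (q - 1) mod int q"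
    using q(1) by (simp add: mult.commute flip: power_mult)
  finally have w_power: "w ^ (2 * k) mod int q = 0 \<or> w ^ (2 * k) mod int q = 1"
    using fermat_power_mod_int[OF q(2)] by simp
  have y1_cong: "[y1 ^ (2 * l) = \<zeta>] (mod int q)"
    by (simp add: \<zeta>_def cong_def)
  have "[r * w = r * y2 ^ l] (mod int q)"
    by (simp add: w_def cong_def mod_mult_right_eq)
  also have "r * y2 ^ l = s * y1 ^ (2 * l) + t"
    using sol by simp
  also have "[s * y1 ^ (2 * l) + t = s * \<zeta> + t] (mod int q)"
    using cong_add[OF cong_scalar_left[OF y1_cong] cong_refl] .
  finally have "[r * w = s * \<zeta> + t] (mod int q)" .
  moreover have "\<zeta> \<in> mu l q"
    unfolding \<zeta>_def using power_mod_mem_mu[OF q0] .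
  moreover have "w \<in> {0..<int q}"
    using q0 by (simp add: w_def)
  ultimately have "\<zeta> \<in> Bset l q k r s t"
    using w_power unfolding Bset_def by (intro CollectI conjI bexI[of _ w]) auto
  then show ?thesis
    by (simp only: \<zeta>_def)
qed

theorem lemma6p1:
  fixes l q k :: nat and r s t :: int
  assumes "prime l" and "l \<ge> 3"
    and "r > 0" and "s > 0" and "t > 0"
    and "gcd r (gcd s t) = 1"
    and "k > 0" and "q = 2 * k * l + 1" and "prime q"
    and "\<not> int q dvd r"
    and "Bset l q k r s t = {}"
  shows "\<not> (\<exists>y1 y2 :: int. r * y2 ^ l - s * y1 ^ (2 * l) = t)"
  using solution_mod_mem_Bset[OF assms(8,9)] assms(11) by blast

end
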